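(* Let $d\geq 2$ be an integer and let $V_d$ be the flip operator on $\mathbb{C}^d\otimes\mathbb{C}^d$, i.e. the linear operator with $V_d(\psi_1\otimes\psi_2)=\psi_2\otimes\psi_1$ for all $\psi_1,\psi_2\in\mathbb{C}^d$. Let $$\rho_d^{(w)}=\frac{1}{d^3}I_{\mathbb{C}^d\otimes\mathbb{C}^d}+\frac{2}{d^2}P_d^{(-)}=\frac{d+1}{d^3}I_{\mathbb{C}^d\otimes\mathbb{C}^d}-\frac{1}{d^2}V_d,\qquad P_d^{(-)}=\tfrac12\big(I_{\mathbb{C}^d\otimes\mathbb{C}^d}-V_d\big),$$ be the Werner state on $\mathbb{C}^d\otimes\mathbb{C}^d$. Then $\rho_d^{(w)}$ is a density source-operator state, i.e. there exists a density operator $T$ (positive semidefinite, trace one) on $\mathbb{C}^d\otimes\mathbb{C}^d\otimes\mathbb{C}^d$ such that $$\mathrm{tr}^{(2)}_{\mathbb{C}^d}[T]=\mathrm{tr}^{(3)}_{\mathbb{C}^d}[T]=\rho_d^{(w)}.$$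
   Context: For an operator $T$ on $\mathbb{C}^d\otimes\mathbb{C}^d\otimes\mathbb{C}^d$, $\mathrm{tr}^{(j)}_{\mathbb{C}^d}[T]$ denotes the partial trace over the $j$-th tensor factor, giving an operator on $\mathbb{C}^d\otimes\mathbb{C}^d$ (the remaining two factors kept in their original order). A quantum state $\rho$ on $\mathbb{C}^d\otimes\mathbb{C}^d$ is called a density source-operator state if it admits a density source-operator, i.e. a density operator $T$ on $\mathbb{C}^d\otimes\mathbb{C}^d\otimes\mathbb{C}^d$ whose partial traces over the second and over the third tensor factors both equal $\rho$. *)

theory Defs
  imports Complex_Main
begin

text \<open>Operators on (C^d)^{\<otimes>2} and (C^d)^{\<otimes>3} are represented by their matrix entries
  in the computational (product) basis; basis vectors e_{i1} \<otimes> e_{i2} (\<otimes> e_{i3}) are indexed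
  by tuples of indices in {0..<d}. Entries outside this range are irrelevant.\<close>

type_synonym op2 = "nat \<times> nat \<Rightarrow> nat \<times> nat \<Rightarrow> complex"
type_synonym op3 = "nat \<times> nat \<times> nat \<Rightarrow> nat \<times> nat \<times> nat \<Rightarrow> complex"

definition idx2 :: "nat \<Rightarrow> (nat \<times> nat) set" where
  "idx2 d = {0..<d} \<times> {0..<d}"

definition idx3 :: "nat \<Rightarrow> (nat \<times> nat \<times> nat) set" where
  "idx3 d = {0..<d} \<times> {0..<d} \<times> {0..<d}"

definition psd3 :: "nat \<Rightarrow> op3 \<Rightarrow> bool" where
  "psd3 d T \<longleftrightarrow> (\<forall>x :: nat \<times> nat \<times> nat \<Rightarrow> complex.
     let q = (\<Sum>i\<in>idx3 d. \<Sum>j\<in>idx3 d. cnj (x i) * T i j * x j) in Im q = 0 \<and> Re q \<ge> 0)"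

definition trace3 :: "nat \<Rightarrow> op3 \<Rightarrow> complex" where
  "trace3 d T = (\<Sum>i\<in>idx3 d. T i i)"

definition density_op3 :: "nat \<Rightarrow> op3 \<Rightarrow> bool" where
  "density_op3 d T \<longleftrightarrow> psd3 d T \<and> trace3 d T = 1"

definition ptrace2 :: "nat \<Rightarrow> op3 \<Rightarrow> op2" where
  "ptrace2 d T = (\<lambda>(i1, i3) (j1, j3). \<Sum>k<d. T (i1, k, i3) (j1, k, j3))"

definition ptrace3 :: "nat \<Rightarrow> op3 \<Rightarrow> op2" where
  "ptrace3 d T = (\<lambda>(i1, i2) (j1, j2). \<Sum>k<d. T (i1, i2, k) (j1, j2, k))"

definition op2_eq :: "nat \<Rightarrow> op2 \<Rightarrow> op2 \<Rightarrow> bool" where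
  "op2_eq d A B \<longleftrightarrow> (\<forall>i\<in>idx2 d. \<forall>j\<in>idx2 d. A i j = B i j)"

definition density_source_operator_state :: "nat \<Rightarrow> op2 \<Rightarrow> bool" where
  "density_source_operator_state d \<rho> \<longleftrightarrow>
     (\<exists>T. density_op3 d T \<and> op2_eq d (ptrace2 d T) \<rho> \<and> op2_eq d (ptrace3 d T) \<rho>)"

definition id2 :: op2 where
  "id2 = (\<lambda>i j. if i = j then 1 else 0)"

text \<open>Flip operator: V (e_a \<otimes> e_b) = e_b \<otimes> e_a, so <i1 i2|V|j1 j2> = [i1 = j2][i2 = j1].\<close>
definition flip :: op2 where
  "flip = (\<lambda>(i1, i2) (j1, j2). if i1 = j2 \<and> i2 = j1 then 1 else 0)"

definition P_minus :: op2 where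
  "P_minus = (\<lambda>i j. (1/2) * (id2 i j - flip i j))"

definition werner :: "nat \<Rightarrow> op2" where
  "werner d = (\<lambda>i j. (1 / of_nat d ^ 3) * id2 i j + (2 / of_nat d ^ 2) * P_minus i j)"

end

theory Submission
  imports Defs
begin

(* The source operator is T = beta ((1 - V12) + (1 - V13)) + gamma A, where Vjk exchanges the
  tensor factors j and k and A is the signed sum of all six factor permutations, i.e. six times
  the projection onto the totally antisymmetric subspace.  Every 1 - Vjk is twice a projection,
  so for beta, gamma >= 0 the quadratic form of T is a nonnegative combination of squared norms.
  Conjugation by V23 exchanges V12 and V13 and fixes A, hence the partial traces over the second
  and the third factor agree.  Tracing out one factor maps each permutation operator to d I,
  d V, I or V, and beta = 1/(d^3 (d-1)), gamma = 1/(d^2 (d-1)) are exactly the coefficients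
  that produce rho = (1/d^3 + 1/d^2) I - (1/d^2) V; the trace condition then follows from
  tr rho = 1. *)

definition swap12 :: "'a \<times> 'a \<times> 'a \<Rightarrow> 'a \<times> 'a \<times> 'a" where
  "swap12 = (\<lambda>(a, b, c). (b, a, c))"

definition swap13 :: "'a \<times> 'a \<times> 'a \<Rightarrow> 'a \<times> 'a \<times> 'a" where
  "swap13 = (\<lambda>(a, b, c). (c, b, a))"

definition swap23 :: "'a \<times> 'a \<times> 'a \<Rightarrow> 'a \<times> 'a \<times> 'a" where
  "swap23 = (\<lambda>(a, b, c). (a, c, b))"

definition cycle3 :: "'a \<times> 'a \<times> 'a \<Rightarrow> 'a \<times> 'a \<times> 'a" where
  "cycle3 = (\<lambda>(a, b, c). (b, c, a))"

definition cycle3_inv :: "'a \<times> 'a \<times> 'a \<Rightarrow> 'a \<times> 'a \<times> 'a" where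
  "cycle3_inv = (\<lambda>(a, b, c). (c, a, b))"

lemmas perm3_defs = swap12_def swap13_def swap23_def cycle3_def cycle3_inv_def

lemma perm3_inverses:
  "swap12 (swap12 i) = i" "swap13 (swap13 i) = i" "swap23 (swap23 i) = i"
  "cycle3 (cycle3_inv i) = i" "cycle3_inv (cycle3 i) = i"
  by (cases i; simp add: perm3_defs)+

lemma perm3_image_cube:
  "swap12 ` (A \<times> A \<times> A) \<subseteq> A \<times> A \<times> A"
  "swap13 ` (A \<times> A \<times> A) \<subseteq> A \<times> A \<times> A"
  "swap23 ` (A \<times> A \<times> A) \<subseteq> A \<times> A \<times> A"
  "cycle3 ` (A \<times> A \<times> A) \<subseteq> A \<times> A \<times> A"
  "cycle3_inv ` (A \<times> A \<times> A) \<subseteq> A \<times> A \<times> A"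
  by (auto simp: perm3_defs)

lemma bij_betw_perm3:
  "bij_betw swap12 (A \<times> A \<times> A) (A \<times> A \<times> A)"
  "bij_betw swap13 (A \<times> A \<times> A) (A \<times> A \<times> A)"
  "bij_betw swap23 (A \<times> A \<times> A) (A \<times> A \<times> A)"
  "bij_betw cycle3 (A \<times> A \<times> A) (A \<times> A \<times> A)"
  "bij_betw cycle3_inv (A \<times> A \<times> A) (A \<times> A \<times> A)"
  using bij_betw_byWitness[OF _ _ perm3_image_cube(1) perm3_image_cube(1)]
    bij_betw_byWitness[OF _ _ perm3_image_cube(2) perm3_image_cube(2)]
    bij_betw_byWitness[OF _ _ perm3_image_cube(3) perm3_image_cube(3)]
    bij_betw_byWitness[OF _ _ perm3_image_cube(4) perm3_image_cube(5)]
    bij_betw_byWitness[OF _ _ perm3_image_cube(5) perm3_image_cube(4)]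
  by (simp_all add: perm3_inverses)

lemma swap23_conj:
  "swap23 \<circ> swap12 \<circ> swap23 = swap13" "swap23 \<circ> swap13 \<circ> swap23 = swap12"
  "swap23 \<circ> swap23 = id"
  "swap23 \<circ> cycle3 \<circ> swap23 = cycle3_inv" "swap23 \<circ> cycle3_inv \<circ> swap23 = cycle3"
  by (auto simp: perm3_defs)

lemma sum_cnj_mult_eq_norm_sum:
  fixes x :: "'a \<Rightarrow> complex"
  shows "(\<Sum>i\<in>S. cnj (x i) * x i) = of_real (\<Sum>i\<in>S. (cmod (x i))\<^sup>2)"
  unfolding of_real_sum complex_norm_square by (simp add: mult.commute)

lemma sum_cnj_perm_mult:
  fixes x y :: "'a \<Rightarrow> complex"
  assumes "bij_betw \<sigma> S S" "\<And>i. i \<in> S \<Longrightarrow> y i = s * y (\<sigma> i)"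
  shows "(\<Sum>i\<in>S. cnj (x (\<sigma> i)) * y i) = s * (\<Sum>i\<in>S. cnj (x i) * y i)"
proof -
  have "(\<Sum>i\<in>S. cnj (x (\<sigma> i)) * y i) = (\<Sum>i\<in>S. s * (cnj (x (\<sigma> i)) * y (\<sigma> i)))"
    by (rule sum.cong) (simp_all add: assms(2))
  also have "\<dots> = s * (\<Sum>i\<in>S. cnj (x i) * y i)"
    using sum.reindex_bij_betw[OF assms(1), of "\<lambda>i. cnj (x i) * y i"]
    by (simp add: sum_distrib_left[symmetric])
  finally show ?thesis .
qed

lemma sum_cnj_mult_sub_involution:
  fixes x :: "'a \<Rightarrow> complex"
  assumes "\<sigma> ` S \<subseteq> S" "\<And>i. i \<in> S \<Longrightarrow> \<sigma> (\<sigma> i) = i"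
  shows "(\<Sum>i\<in>S. cnj (x i) * (x i - x (\<sigma> i)))
    = of_real ((\<Sum>i\<in>S. (cmod (x i - x (\<sigma> i)))\<^sup>2) / 2)"
proof -
  let ?y = "\<lambda>i. x i - x (\<sigma> i)"
  have "bij_betw \<sigma> S S"
    using assms by (intro bij_betw_byWitness[where f' = \<sigma>]) auto
  moreover have "?y i = - 1 * ?y (\<sigma> i)" if "i \<in> S" for i
    using assms(2)[OF that] by simp
  ultimately have swapped:
    "(\<Sum>i\<in>S. cnj (x (\<sigma> i)) * ?y i) = - 1 * (\<Sum>i\<in>S. cnj (x i) * ?y i)"
    by (rule sum_cnj_perm_mult)
  have "of_real (\<Sum>i\<in>S. (cmod (?y i))\<^sup>2) = (\<Sum>i\<in>S. cnj (?y i) * ?y i)"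
    by (rule sum_cnj_mult_eq_norm_sum[symmetric])
  also have "\<dots> = (\<Sum>i\<in>S. cnj (x i) * ?y i) - (\<Sum>i\<in>S. cnj (x (\<sigma> i)) * ?y i)"
    by (simp add: sum_subtractf[symmetric] left_diff_distrib)
  finally show ?thesis
    unfolding swapped by simp
qed

definition antisym3 :: "('a \<times> 'a \<times> 'a \<Rightarrow> complex) \<Rightarrow> 'a \<times> 'a \<times> 'a \<Rightarrow> complex" where
  "antisym3 x i =
     x i - x (swap12 i) - x (swap13 i) - x (swap23 i) + x (cycle3 i) + x (cycle3_inv i)"

lemma antisym3_perm3:
  "antisym3 x (swap12 i) = - antisym3 x i" "antisym3 x (swap13 i) = - antisym3 x i"
  "antisym3 x (swap23 i) = - antisym3 x i"
  "antisym3 x (cycle3 i) = antisym3 x i" "antisym3 x (cycle3_inv i) = antisym3 x i"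
  by (cases i; simp add: antisym3_def perm3_defs algebra_simps)+

lemma sum_cnj_mult_antisym3:
  fixes x :: "'a \<times> 'a \<times> 'a \<Rightarrow> complex"
  shows "(\<Sum>i\<in>A \<times> A \<times> A. cnj (x i) * antisym3 x i)
    = of_real ((\<Sum>i\<in>A \<times> A \<times> A. (cmod (antisym3 x i))\<^sup>2) / 6)"
proof -
  let ?C = "A \<times> A \<times> A" and ?y = "antisym3 x"
  have "of_real (\<Sum>i\<in>?C. (cmod (?y i))\<^sup>2) = (\<Sum>i\<in>?C. cnj (?y i) * ?y i)"
    by (rule sum_cnj_mult_eq_norm_sum[symmetric])
  also have "\<dots> = (\<Sum>i\<in>?C. cnj (x i) * ?y i) - (\<Sum>i\<in>?C. cnj (x (swap12 i)) * ?y i)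
     - (\<Sum>i\<in>?C. cnj (x (swap13 i)) * ?y i) - (\<Sum>i\<in>?C. cnj (x (swap23 i)) * ?y i)
     + (\<Sum>i\<in>?C. cnj (x (cycle3 i)) * ?y i) + (\<Sum>i\<in>?C. cnj (x (cycle3_inv i)) * ?y i)"
    by (simp add: antisym3_def sum.distrib sum_subtractf algebra_simps)
  also have "\<dots> = 6 * (\<Sum>i\<in>?C. cnj (x i) * ?y i)"
    using sum_cnj_perm_mult[OF bij_betw_perm3(1), where y = ?y and s = "-1" and x = x]
      sum_cnj_perm_mult[OF bij_betw_perm3(2), where y = ?y and s = "-1" and x = x]
      sum_cnj_perm_mult[OF bij_betw_perm3(3), where y = ?y and s = "-1" and x = x]
      sum_cnj_perm_mult[OF bij_betw_perm3(4), where y = ?y and s = "1" and x = x]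
      sum_cnj_perm_mult[OF bij_betw_perm3(5), where y = ?y and s = "1" and x = x]
    by (simp add: antisym3_perm3)
  finally show ?thesis by simp
qed

(* The matrix of x \<mapsto> x \<circ> \<sigma>; thus perm_op swapjk is the flip Vjk of the factors j and k. *)
definition perm_op :: "('a \<Rightarrow> 'a) \<Rightarrow> 'a \<Rightarrow> 'a \<Rightarrow> complex" where
  "perm_op \<sigma> i j = of_bool (j = \<sigma> i)"

lemma sum_perm_op_mult:
  assumes "finite S" "\<sigma> i \<in> S"
  shows "(\<Sum>j\<in>S. perm_op \<sigma> i j * x j) = x (\<sigma> i)"
proof -
  have "S \<inter> {j. j = \<sigma> i} = {\<sigma> i}"
    using assms(2) by blast
  then show ?thesis
    using assms(1) by (simp add: perm_op_def mult.commute)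
qed

lemma perm_op_conj:
  assumes "\<And>i. \<tau> (\<tau> i) = i"
  shows "perm_op \<sigma> (\<tau> i) (\<tau> j) = perm_op (\<tau> \<circ> \<sigma> \<circ> \<tau>) i j"
proof -
  have "\<tau> j = \<sigma> (\<tau> i) \<longleftrightarrow> j = \<tau> (\<sigma> (\<tau> i))"
    using assms by metis
  then show ?thesis
    by (simp add: perm_op_def)
qed

lemma sum_of_bool_unique:
  assumes "finite S" "a \<in> S" "\<And>k. P k \<Longrightarrow> k = a"
  shows "(\<Sum>k\<in>S. of_bool (P k)) = (of_bool (P a) :: 'b :: semiring_1)"
proof -
  have "(\<Sum>k\<in>S. of_bool (P k)) = (\<Sum>k\<in>S. if k = a then of_bool (P a) else (0 :: 'b))"
    by (rule sum.cong) (auto dest: assms(3))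
  then show ?thesis
    using assms(1,2) by simp
qed

lemma ptrace3_perm_op:
  assumes "i1 < d" "i2 < d"
  shows "ptrace3 d (perm_op id) (i1, i2) (j1, j2) = of_nat d * id2 (i1, i2) (j1, j2)"
    and "ptrace3 d (perm_op swap12) (i1, i2) (j1, j2) = of_nat d * flip (i1, i2) (j1, j2)"
    and "ptrace3 d (perm_op swap13) (i1, i2) (j1, j2) = id2 (i1, i2) (j1, j2)"
    and "ptrace3 d (perm_op swap23) (i1, i2) (j1, j2) = id2 (i1, i2) (j1, j2)"
    and "ptrace3 d (perm_op cycle3) (i1, i2) (j1, j2) = flip (i1, i2) (j1, j2)"
    and "ptrace3 d (perm_op cycle3_inv) (i1, i2) (j1, j2) = flip (i1, i2) (j1, j2)"
proof -
  show "ptrace3 d (perm_op id) (i1, i2) (j1, j2) = of_nat d * id2 (i1, i2) (j1, j2)"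
    by (auto simp: ptrace3_def perm_op_def id2_def)
  show "ptrace3 d (perm_op swap12) (i1, i2) (j1, j2) = of_nat d * flip (i1, i2) (j1, j2)"
    by (auto simp: ptrace3_def perm_op_def flip_def swap12_def)
  show "ptrace3 d (perm_op swap13) (i1, i2) (j1, j2) = id2 (i1, i2) (j1, j2)"
    unfolding ptrace3_def perm_op_def swap13_def prod.case
    using assms by (subst sum_of_bool_unique[where a = i1]) (auto simp: id2_def)
  show "ptrace3 d (perm_op swap23) (i1, i2) (j1, j2) = id2 (i1, i2) (j1, j2)"
    unfolding ptrace3_def perm_op_def swap23_def prod.case
    using assms by (subst sum_of_bool_unique[where a = i2]) (auto simp: id2_def)
  show "ptrace3 d (perm_op cycle3) (i1, i2) (j1, j2) = flip (i1, i2) (j1, j2)"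
    unfolding ptrace3_def perm_op_def cycle3_def prod.case
    using assms by (subst sum_of_bool_unique[where a = i1]) (auto simp: flip_def)
  show "ptrace3 d (perm_op cycle3_inv) (i1, i2) (j1, j2) = flip (i1, i2) (j1, j2)"
    unfolding ptrace3_def perm_op_def cycle3_inv_def prod.case
    using assms by (subst sum_of_bool_unique[where a = i2]) (auto simp: flip_def)
qed

definition antisym_op3 :: "'a \<times> 'a \<times> 'a \<Rightarrow> 'a \<times> 'a \<times> 'a \<Rightarrow> complex" where
  "antisym_op3 i j = perm_op id i j - perm_op swap12 i j - perm_op swap13 i j - perm_op swap23 i j
     + perm_op cycle3 i j + perm_op cycle3_inv i j"

definition source_op :: "real \<Rightarrow> real \<Rightarrow> op3" where
  "source_op \<beta> \<gamma> i j =
     of_real \<beta> * ((perm_op id i j - perm_op swap12 i j) + (perm_op id i j - perm_op swap13 i j))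
     + of_real \<gamma> * antisym_op3 i j"

lemma sum_source_op_mult:
  assumes "i \<in> idx3 d"
  shows "(\<Sum>j\<in>idx3 d. source_op \<beta> \<gamma> i j * x j)
    = of_real \<beta> * ((x i - x (swap12 i)) + (x i - x (swap13 i))) + of_real \<gamma> * antisym3 x i"
proof -
  let ?S = "\<lambda>\<sigma>. \<Sum>j\<in>idx3 d. perm_op \<sigma> i j * x j"
  have "(\<Sum>j\<in>idx3 d. source_op \<beta> \<gamma> i j * x j)
    = of_real \<beta> * ((?S id - ?S swap12) + (?S id - ?S swap13))
      + of_real \<gamma> * (?S id - ?S swap12 - ?S swap13 - ?S swap23 + ?S cycle3 + ?S cycle3_inv)"
    by (simp add: source_op_def antisym_op3_def sum.distrib sum_subtractf sum_distrib_left algebra_simps)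
  moreover have "finite (idx3 d)"
    by (simp add: idx3_def)
  ultimately show ?thesis
    using assms perm3_image_cube[of "{0..<d}", folded idx3_def]
    by (simp add: sum_perm_op_mult antisym3_def image_subset_iff)
qed

lemma psd3I:
  assumes "\<And>x. \<exists>r \<ge> 0. (\<Sum>i\<in>idx3 d. \<Sum>j\<in>idx3 d. cnj (x i) * T i j * x j) = of_real r"
  shows "psd3 d T"
  unfolding psd3_def Let_def
proof
  fix x
  from assms[of x] show "Im (\<Sum>i\<in>idx3 d. \<Sum>j\<in>idx3 d. cnj (x i) * T i j * x j) = 0
      \<and> Re (\<Sum>i\<in>idx3 d. \<Sum>j\<in>idx3 d. cnj (x i) * T i j * x j) \<ge> 0"
    by (metis Im_complex_of_real Re_complex_of_real)
qed

lemma psd3_source_op: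
  assumes "\<beta> \<ge> 0" "\<gamma> \<ge> 0"
  shows "psd3 d (source_op \<beta> \<gamma>)"
proof (rule psd3I)
  fix x :: "nat \<times> nat \<times> nat \<Rightarrow> complex"
  let ?q = "\<Sum>i\<in>idx3 d. \<Sum>j\<in>idx3 d. cnj (x i) * source_op \<beta> \<gamma> i j * x j"
  let ?C = "{0..<d} \<times> {0..<d} \<times> {0..<d}"
  have "?q = (\<Sum>i\<in>idx3 d. cnj (x i) * (\<Sum>j\<in>idx3 d. source_op \<beta> \<gamma> i j * x j))"
    by (simp add: sum_distrib_left mult.assoc)
  also have "\<dots> = (\<Sum>i\<in>?C. of_real \<beta> * (cnj (x i) * (x i - x (swap12 i)))
      + of_real \<beta> * (cnj (x i) * (x i - x (swap13 i))) + of_real \<gamma> * (cnj (x i) * antisym3 x i))"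
    unfolding idx3_def[symmetric]
    by (rule sum.cong[OF refl]) (simp only: sum_source_op_mult, simp add: algebra_simps)
  also have "\<dots> = of_real \<beta> * (\<Sum>i\<in>?C. cnj (x i) * (x i - x (swap12 i)))
      + of_real \<beta> * (\<Sum>i\<in>?C. cnj (x i) * (x i - x (swap13 i)))
      + of_real \<gamma> * (\<Sum>i\<in>?C. cnj (x i) * antisym3 x i)"
    by (simp add: sum.distrib sum_distrib_left)
  also have "\<dots> = of_real (\<beta> * ((\<Sum>i\<in>?C. (cmod (x i - x (swap12 i)))\<^sup>2) / 2)
      + \<beta> * ((\<Sum>i\<in>?C. (cmod (x i - x (swap13 i)))\<^sup>2) / 2)
      + \<gamma> * ((\<Sum>i\<in>?C. (cmod (antisym3 x i))\<^sup>2) / 6))" (is "_ = of_real ?r")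
    by (simp add: sum_cnj_mult_sub_involution sum_cnj_mult_antisym3 perm3_image_cube perm3_inverses)
  finally have "?q = of_real ?r" .
  moreover have "?r \<ge> 0"
    using assms by (simp add: sum_nonneg)
  ultimately show "\<exists>r \<ge> 0. ?q = of_real r"
    by blast
qed

lemma source_op_swap23: "source_op \<beta> \<gamma> (swap23 i) (swap23 j) = source_op \<beta> \<gamma> i j"
  by (simp add: source_op_def antisym_op3_def perm_op_conj perm3_inverses swap23_conj algebra_simps)

lemma ptrace2_eq_ptrace3_if_swap23_invariant:
  assumes "\<And>i j. T (swap23 i) (swap23 j) = T i j"
  shows "ptrace2 d T = ptrace3 d T"
proof (intro ext, clarify)
  fix i1 i3 j1 j3
  have "T (i1, k, i3) (j1, k, j3) = T (i1, i3, k) (j1, j3, k)" for k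
    using assms[of "(i1, i3, k)" "(j1, j3, k)"] by (simp add: swap23_def)
  then show "ptrace2 d T (i1, i3) (j1, j3) = ptrace3 d T (i1, i3) (j1, j3)"
    by (simp add: ptrace2_def ptrace3_def)
qed

lemma ptrace3_source_op:
  assumes "i1 < d" "i2 < d"
  shows "ptrace3 d (source_op \<beta> \<gamma>) (i1, i2) (j1, j2)
    = (of_real \<beta> * (2 * of_nat d - 1) + of_real \<gamma> * (of_nat d - 2)) * id2 (i1, i2) (j1, j2)
      - (of_real \<beta> * of_nat d + of_real \<gamma> * (of_nat d - 2)) * flip (i1, i2) (j1, j2)"
proof -
  let ?P = "\<lambda>\<sigma>. ptrace3 d (perm_op \<sigma>) (i1, i2) (j1, j2)"
  have "ptrace3 d (source_op \<beta> \<gamma>) (i1, i2) (j1, j2)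
    = of_real \<beta> * ((?P id - ?P swap12) + (?P id - ?P swap13))
      + of_real \<gamma> * (?P id - ?P swap12 - ?P swap13 - ?P swap23 + ?P cycle3 + ?P cycle3_inv)"
    by (simp add: ptrace3_def source_op_def antisym_op3_def sum.distrib sum_subtractf
        sum_distrib_left sum_negf ring_distribs)
  then show ?thesis
    by (simp add: ptrace3_perm_op[OF assms] algebra_simps)
qed

lemma werner_eq_id2_flip:
  "werner d i j = (1 / of_nat d ^ 3 + 1 / of_nat d ^ 2) * id2 i j - 1 / of_nat d ^ 2 * flip i j"
  by (simp add: werner_def P_minus_def algebra_simps)

definition werner_source :: "nat \<Rightarrow> op3" where
  "werner_source d = source_op (1 / (real d ^ 3 * (real d - 1))) (1 / (real d ^ 2 * (real d - 1)))"

lemma werner_source_coefficients: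
  fixes x :: "'a :: field"
  assumes "x \<noteq> 0" "x \<noteq> 1"
  shows "1 / (x ^ 3 * (x - 1)) * (2 * x - 1) + 1 / (x ^ 2 * (x - 1)) * (x - 2)
      = 1 / x ^ 3 + 1 / x ^ 2"
    and "1 / (x ^ 3 * (x - 1)) * x + 1 / (x ^ 2 * (x - 1)) * (x - 2) = 1 / x ^ 2"
  using assms by (simp_all add: divide_simps) (simp_all add: algebra_simps eval_nat_numeral)

lemma ptrace3_werner_source:
  assumes "d \<ge> 2" "i \<in> idx2 d"
  shows "ptrace3 d (werner_source d) i j = werner d i j"
proof -
  obtain i1 i2 j1 j2 where ij: "i = (i1, i2)" "j = (j1, j2)" and "i1 < d" "i2 < d"
    using assms(2) by (cases i, cases j) (auto simp: idx2_def)
  let ?d = "of_nat d :: complex"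
  have "?d \<noteq> 0" "?d \<noteq> 1"
    using assms(1) by auto
  then have "of_real (1 / (real d ^ 3 * (real d - 1))) * (2 * ?d - 1)
      + of_real (1 / (real d ^ 2 * (real d - 1))) * (?d - 2) = 1 / ?d ^ 3 + 1 / ?d ^ 2"
    and "of_real (1 / (real d ^ 3 * (real d - 1))) * ?d
      + of_real (1 / (real d ^ 2 * (real d - 1))) * (?d - 2) = 1 / ?d ^ 2"
    using werner_source_coefficients[of ?d] by simp_all
  then show ?thesis
    unfolding ij werner_source_def werner_eq_id2_flip
    by (simp add: ptrace3_source_op[OF \<open>i1 < d\<close> \<open>i2 < d\<close>])
qed

lemma trace3_eq_sum_ptrace3: "trace3 d T = (\<Sum>i\<in>idx2 d. ptrace3 d T i i)"
  by (simp add: trace3_def idx3_def idx2_def ptrace3_def atLeast0LessThan sum.cartesian_product')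

lemma sum_werner_diag:
  assumes "d > 0"
  shows "(\<Sum>i\<in>idx2 d. werner d i i) = 1"
proof -
  let ?d = "of_nat d :: complex"
  have "flip (a, b) (a, b) = (if b = a then 1 else 0)" for a b
    by (auto simp: flip_def)
  then have "(\<Sum>i\<in>idx2 d. id2 i i) = ?d ^ 2" "(\<Sum>i\<in>idx2 d. flip i i) = ?d"
    by (simp_all add: idx2_def id2_def sum.cartesian_product' power2_eq_square)
  then have "(\<Sum>i\<in>idx2 d. werner d i i) = (1 / ?d ^ 3 + 1 / ?d ^ 2) * ?d ^ 2 - 1 / ?d ^ 2 * ?d"
    by (simp add: werner_eq_id2_flip sum_subtractf sum_distrib_left[symmetric]
        sum_divide_distrib[symmetric])
  also have "\<dots> = 1"
    using assms by (simp add: divide_simps) (simp add: algebra_simps eval_nat_numeral)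
  finally show ?thesis .
qed

theorem proposition1:
  fixes d :: nat
  assumes "d \<ge> 2"
  shows "density_source_operator_state d (werner d)"
proof -
  have "ptrace2 d (werner_source d) = ptrace3 d (werner_source d)"
    by (rule ptrace2_eq_ptrace3_if_swap23_invariant) (simp add: werner_source_def source_op_swap23)
  moreover have "psd3 d (werner_source d)"
    unfolding werner_source_def using assms by (intro psd3_source_op) auto
  moreover have "trace3 d (werner_source d) = 1"
    using assms by (simp add: trace3_eq_sum_ptrace3 ptrace3_werner_source sum_werner_diag)
  ultimately show ?thesis
    unfolding density_source_operator_state_def density_op3_def op2_eq_def
    using ptrace3_werner_source[OF assms] by auto
qed

end
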